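(* Let $p\ge1$, $X=\{0,1,\dots,p\}$, and let $\Gamma^p_n$ be the $n$-th Schreier graph of the star automaton group $\mathcal G_{S_p}$. If $u,v$ are adjacent vertices of $\Gamma^p_n$, then for every $w\in X^\ast$ the vertices $uw$ and $vw$ are adjacent in $\Gamma^p_{n+|w|}$, with the only possible exception of the case where $\{u,v\}=\{0^n,i^n\}$ for some $i\in\{1,\dots,p\}$ and $w$ starts with $0$ or with $i$.
   Context: $\mathcal G_{S_p}$ is generated by $e_1,\dots,e_p$, transformations of $X^\ast$ defined recursively by $e_i(0w)=i\,e_i(w)$, $e_i(iw)=0w$, $e_i(jw)=jw$ for $j\notin\{0,i\}$, $e_i(\emptyset)=\emptyset$. The Schreier graph $\Gamma^p_n$ has vertex set $X^n$ and, for each $v\in X^n$ and each $i$, an edge labelled $e_i$ joining $v$ and $e_i(v)$ (a loop if $e_i(v)=v$). $|w|$ is the length of $w$. *)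

theory Defs
  imports Main
begin

text \<open>Alphabet X = {0,1,...,p} encoded as natural numbers; words are lists.
  Generator e_i of the star automaton group (intended for 1 <= i <= p).\<close>
fun star_gen :: "nat \<Rightarrow> nat list \<Rightarrow> nat list" where
  "star_gen i [] = []"
| "star_gen i (x # w) =
     (if x = 0 then i # star_gen i w
      else if x = i then 0 # w
      else x # w)"

definition schreier_vertices :: "nat \<Rightarrow> nat \<Rightarrow> nat list set" where
  "schreier_vertices p n = {v. length v = n \<and> set v \<subseteq> {0..p}}"

definition schreier_adj :: "nat \<Rightarrow> nat \<Rightarrow> nat list \<Rightarrow> nat list \<Rightarrow> bool" where
  "schreier_adj p n u v \<longleftrightarrow>
     u \<in> schreier_vertices p n \<and> v \<in> schreier_vertices p n \<and>
     (\<exists>i\<in>{1..p}. star_gen i u = v \<or> star_gen i v = u)"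

end

theory Submission
  imports Defs
begin

text \<open>The generator e_i rewrites a word only up to and including its first nonzero letter.
  So if u has a nonzero letter, e_i(uw) = e_i(u)w and the edge between u and e_i(u) lifts.
  Otherwise u = 0^n, e_i(u) = i^n and e_i(0^n w) = i^n e_i(w), which is i^n w unless
  w starts with 0 or i.\<close>

lemma star_gen_append:
  "\<exists>x\<in>set u. x \<noteq> 0 \<Longrightarrow> star_gen i (u @ w) = star_gen i u @ w"
  by (induction u) auto

lemma star_gen_replicate_zero_append:
  "star_gen i (replicate k 0 @ w) = replicate k i @ star_gen i w"
  by (induction k) auto

lemma star_gen_fixed:
  "w = [] \<or> hd w \<notin> {0, i} \<Longrightarrow> star_gen i w = w"
  by (cases w) auto

lemma star_gen_append_cases:
  assumes "star_gen i u = v" and "length u = n"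
  shows "star_gen i (u @ w) = v @ w \<or>
         ({u, v} = {replicate n 0, replicate n i} \<and> w \<noteq> [] \<and> hd w \<in> {0, i})"
proof (cases "\<exists>x\<in>set u. x \<noteq> 0")
  case True
  then show ?thesis using assms(1) by (simp add: star_gen_append)
next
  case False
  then have u: "u = replicate n 0"
    using assms(2) replicate_length_same[of u 0] by auto
  then have v: "v = replicate n i"
    using assms(1) star_gen_replicate_zero_append[of i n "[]"] by simp
  show ?thesis
  proof (cases "w = [] \<or> hd w \<notin> {0, i}")
    case True
    then show ?thesis using u v by (simp add: star_gen_replicate_zero_append star_gen_fixed)
  next
    case False
    then show ?thesis using u v by auto
  qed
qed

lemma schreier_vertices_append:
  "u \<in> schreier_vertices p n \<Longrightarrow> set w \<subseteq> {0..p} \<Longrightarrow>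
   u @ w \<in> schreier_vertices p (n + length w)"
  by (auto simp: schreier_vertices_def)

theorem lemma4p3:
  fixes p n :: nat and u v w :: "nat list"
  assumes "p \<ge> 1"
    and "schreier_adj p n u v"
    and "set w \<subseteq> {0..p}"
  shows "schreier_adj p (n + length w) (u @ w) (v @ w) \<or>
         (\<exists>i\<in>{1..p}. {u, v} = {replicate n 0, replicate n i} \<and>
            w \<noteq> [] \<and> (hd w = 0 \<or> hd w = i))"
proof -
  obtain i where i: "i \<in> {1..p}" and edge: "star_gen i u = v \<or> star_gen i v = u"
    and u: "u \<in> schreier_vertices p n" and v: "v \<in> schreier_vertices p n"
    using assms(2) unfolding schreier_adj_def by blast
  have "length u = n" "length v = n"
    using u v by (simp_all add: schreier_vertices_def)
  then have "star_gen i (u @ w) = v @ w \<or> star_gen i (v @ w) = u @ w \<or>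
      ({u, v} = {replicate n 0, replicate n i} \<and> w \<noteq> [] \<and> hd w \<in> {0, i})"
    using edge star_gen_append_cases[of i u v n w] star_gen_append_cases[of i v u n w]
    by (auto simp: insert_commute)
  then show ?thesis
    using i schreier_vertices_append[OF u assms(3)] schreier_vertices_append[OF v assms(3)]
    unfolding schreier_adj_def by blast
qed

end
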